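(* Let $p$ be a prime power and let $G(p)$ be the point–line incidence graph of a projective plane of order $p$: a bipartite graph on $n = 2(p^2+p+1)$ vertices whose parts are the $p^2+p+1$ points and the $p^2+p+1$ lines, a point being adjacent to a line iff it lies on the line (so $G(p)$ is $(p+1)$-regular and contains no $K_{2,2}$). Then $$\chi_{2K_2}(G(p)) \ge \sqrt{\frac{2(p^2+p+1)(p+1)}{2p+1}} + \frac12 \ge \sqrt{\frac n2 + \frac{\sqrt n}{4}} + \frac12.$$
   Context: All graphs are finite and simple. For a fixed bipartite graph $H$, a proper vertex coloring of a graph $G$ is called an $H$-avoiding coloring if for any two color classes, the subgraph of $G$ induced by their union contains no induced subgraph isomorphic to $H$. $\chi_H(G)$ denotes the minimum number of colors in an $H$-avoiding coloring of $G$. $2K_2$ is the disjoint union of two edges. *)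

theory Defs
  imports Complex_Main "HOL-Computational_Algebra.Primes"
begin

definition simple_graph :: "'v set \<Rightarrow> ('v \<Rightarrow> 'v \<Rightarrow> bool) \<Rightarrow> bool" where
  "simple_graph V E \<longleftrightarrow> finite V \<and> (\<forall>x y. E x y \<longrightarrow> x \<in> V \<and> y \<in> V)
     \<and> (\<forall>x y. E x y \<longrightarrow> E y x) \<and> (\<forall>x. \<not> E x x)"

definition has_induced_2K2 :: "('v \<Rightarrow> 'v \<Rightarrow> bool) \<Rightarrow> 'v set \<Rightarrow> bool" where
  "has_induced_2K2 E S \<longleftrightarrow> (\<exists>a\<in>S. \<exists>b\<in>S. \<exists>c\<in>S. \<exists>d\<in>S.
      distinct [a, b, c, d] \<and> E a b \<and> E c d \<and>
      \<not> E a c \<and> \<not> E a d \<and> \<not> E b c \<and> \<not> E b d)"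

definition avoiding_2K2_coloring :: "'v set \<Rightarrow> ('v \<Rightarrow> 'v \<Rightarrow> bool) \<Rightarrow> nat \<Rightarrow> ('v \<Rightarrow> nat) \<Rightarrow> bool" where
  "avoiding_2K2_coloring V E k f \<longleftrightarrow>
     (\<forall>v\<in>V. f v < k) \<and>
     (\<forall>x\<in>V. \<forall>y\<in>V. E x y \<longrightarrow> f x \<noteq> f y) \<and>
     (\<forall>i j. \<not> has_induced_2K2 E {v\<in>V. f v = i \<or> f v = j})"

definition chi_2K2 :: "'v set \<Rightarrow> ('v \<Rightarrow> 'v \<Rightarrow> bool) \<Rightarrow> nat" where
  "chi_2K2 V E = (LEAST k. \<exists>f. avoiding_2K2_coloring V E k f)"

definition prime_power :: "nat \<Rightarrow> bool" where
  "prime_power p \<longleftrightarrow> (\<exists>q k. prime q \<and> k \<ge> 1 \<and> p = q ^ k)"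

definition projective_plane_of_order ::
    "'p set \<Rightarrow> 'l set \<Rightarrow> ('p \<Rightarrow> 'l \<Rightarrow> bool) \<Rightarrow> nat \<Rightarrow> bool" where
  "projective_plane_of_order P L inc ord \<longleftrightarrow>
     finite P \<and> finite L \<and>
     (\<forall>a\<in>P. \<forall>b\<in>P. a \<noteq> b \<longrightarrow> (\<exists>!l. l \<in> L \<and> inc a l \<and> inc b l)) \<and>
     (\<forall>l\<in>L. \<forall>m\<in>L. l \<noteq> m \<longrightarrow> (\<exists>!a. a \<in> P \<and> inc a l \<and> inc a m)) \<and>
     (\<exists>a\<in>P. \<exists>b\<in>P. \<exists>c\<in>P. \<exists>d\<in>P. distinct [a, b, c, d] \<and>
        (\<forall>l\<in>L. card ({a, b, c, d} \<inter> {x. inc x l}) \<le> 2)) \<and>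
     (\<forall>l\<in>L. card {a\<in>P. inc a l} = ord + 1)"

definition incidence_vertices :: "'p set \<Rightarrow> 'l set \<Rightarrow> ('p + 'l) set" where
  "incidence_vertices P L = Inl ` P \<union> Inr ` L"

definition incidence_edge :: "'p set \<Rightarrow> 'l set \<Rightarrow> ('p \<Rightarrow> 'l \<Rightarrow> bool) \<Rightarrow> ('p + 'l) \<Rightarrow> ('p + 'l) \<Rightarrow> bool" where
  "incidence_edge P L inc x y \<longleftrightarrow>
     (\<exists>a\<in>P. \<exists>l\<in>L. inc a l \<and> ((x = Inl a \<and> y = Inr l) \<or> (x = Inr l \<and> y = Inl a)))"

end

theory Submission
  imports Defs
begin

text \<open>For any two colours, the incidences between
  the two colour classes form a bipartite graph that contains no C4 (two points share at most one
  line) and no induced 2K2; such a graph is a double star, so with maximum degree p + 1 it has at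
  most 2p + 1 edges. Every one of the (p^2 + p + 1)(p + 1) incidences lies in one of the
  k(k - 1)/2 colour pairs, hence k(k - 1)(2p + 1) \<ge> 2(p^2 + p + 1)(p + 1), and solving this
  quadratic inequality for k gives the bound.\<close>

lemma neighbours_singleton_if_no_C4_no_2K2:
  fixes adj :: "'a \<Rightarrow> 'b \<Rightarrow> bool"
  assumes no_C4: "\<And>a1 a2 b1 b2. adj a1 b1 \<Longrightarrow> adj a1 b2 \<Longrightarrow> adj a2 b1 \<Longrightarrow> adj a2 b2 \<Longrightarrow> a1 = a2 \<or> b1 = b2"
    and no_2K2: "\<And>a1 a2 b1 b2. adj a1 b1 \<Longrightarrow> adj a2 b2 \<Longrightarrow> a1 \<noteq> a2 \<Longrightarrow> b1 \<noteq> b2 \<Longrightarrow> adj a1 b2 \<or> adj a2 b1"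
    and "adj a0 b0" "adj a b" "adj a0 b" "a \<noteq> a0" "b \<noteq> b0"
  shows "{x. adj x b0} = {a0}"
proof -
  have "\<not> adj a b0" using no_C4 assms(3-7) by blast
  moreover have False if "adj a' b0" "a' \<noteq> a0" for a'
  proof -
    have "adj a' b" using no_2K2 that assms(4,7) \<open>\<not> adj a b0\<close> by blast
    with no_C4 that assms(3,5,7) show False by blast
  qed
  ultimately show ?thesis using assms(3) by auto
qed

lemma C4_free_2K2_free_card_le:
  fixes H :: "('a \<times> 'b) set"
  assumes fin: "finite H"
    and deg_left: "\<And>a. card {y. (a, y) \<in> H} \<le> D"
    and deg_right: "\<And>b. card {x. (x, b) \<in> H} \<le> D"
    and no_C4: "\<And>a1 a2 b1 b2. (a1, b1) \<in> H \<Longrightarrow> (a1, b2) \<in> H \<Longrightarrow> (a2, b1) \<in> H \<Longrightarrow> (a2, b2) \<in> H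
                  \<Longrightarrow> a1 = a2 \<or> b1 = b2"
    and no_2K2: "\<And>a1 a2 b1 b2. (a1, b1) \<in> H \<Longrightarrow> (a2, b2) \<in> H \<Longrightarrow> a1 \<noteq> a2 \<Longrightarrow> b1 \<noteq> b2
                  \<Longrightarrow> (a1, b2) \<in> H \<or> (a2, b1) \<in> H"
  shows "card H \<le> 2 * D - 1"
proof (cases "H = {}")
  case False
  define deg where "deg e = card {y. (fst e, y) \<in> H} + card {x. (x, snd e) \<in> H}" for e
  have "Max (deg ` H) \<in> deg ` H" using fin False by simp
  then obtain a0 b0 where e0: "(a0, b0) \<in> H" and "deg (a0, b0) = Max (deg ` H)" by auto
  with fin have max: "deg e \<le> deg (a0, b0)" if "e \<in> H" for e using that by simp
  have fin_nbhd: "finite {y. (a, y) \<in> H}" "finite {x. (x, b) \<in> H}" for a b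
    by (rule finite_subset[of _ "snd ` H"] finite_subset[of _ "fst ` H"], force, simp add: fin)+
  txt \<open>An edge \<open>(a0, b0)\<close> of maximal degree sum covers every edge: otherwise \<open>b0\<close> (or \<open>a0\<close>)
    would be a leaf while its competitor has degree at least two.\<close>
  have star_cover: "a = a0 \<or> b = b0" if ab: "(a, b) \<in> H" for a b
  proof (rule ccontr)
    assume off_star: "\<not> (a = a0 \<or> b = b0)"
    then consider "(a0, b) \<in> H" | "(a, b0) \<in> H"
      using no_2K2[OF e0 ab] by auto
    then show False
    proof cases
      case 1
      have "{x. (x, b0) \<in> H} = {a0}"
        using neighbours_singleton_if_no_C4_no_2K2[of "\<lambda>x y. (x, y) \<in> H"] no_C4 no_2K2 e0 ab 1 off_star
        by blast
      moreover have "card {a, a0} \<le> card {x. (x, b) \<in> H}"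
        using ab 1 fin_nbhd by (intro card_mono) auto
      ultimately show False using max[OF 1] off_star by (simp add: deg_def)
    next
      case 2
      have "{y. (a0, y) \<in> H} = {b0}"
        using neighbours_singleton_if_no_C4_no_2K2[of "\<lambda>y x. (x, y) \<in> H"] no_C4 no_2K2 e0 ab 2 off_star
        by blast
      moreover have "card {b, b0} \<le> card {y. (a, y) \<in> H}"
        using ab 2 fin_nbhd by (intro card_mono) auto
      ultimately show False using max[OF 2] off_star by (simp add: deg_def)
    qed
  qed
  define left_star where "left_star = {e \<in> H. fst e = a0}"
  define right_star where "right_star = {e \<in> H. snd e = b0}"
  have "card H + 1 \<le> card left_star + card right_star"
  proof -
    have "H = left_star \<union> right_star"
      using star_cover by (fastforce simp: left_star_def right_star_def)
    moreover have "(a0, b0) \<in> left_star \<inter> right_star"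
      using e0 by (simp add: left_star_def right_star_def)
    ultimately show ?thesis
      using fin card_Un_Int[of left_star right_star] card_gt_0_iff[of "left_star \<inter> right_star"]
      by (auto simp: left_star_def right_star_def)
  qed
  moreover have "card left_star = card {y. (a0, y) \<in> H}"
    unfolding left_star_def by (rule bij_betw_same_card[of snd]) (auto simp: bij_betw_def inj_on_def image_iff)
  moreover have "card right_star = card {x. (x, b0) \<in> H}"
    unfolding right_star_def by (rule bij_betw_same_card[of fst]) (auto simp: bij_betw_def inj_on_def image_iff)
  ultimately have "card H + 1 \<le> 2 * D" using deg_left[of a0] deg_right[of b0] by linarith
  then show ?thesis by simp
qed simp

lemma injective_coloring_avoids_2K2:
  assumes "finite V" and "\<And>x. \<not> E x x" and h: "bij_betw h V {0..<card V}"
  shows "avoiding_2K2_coloring V E (card V) h"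
  unfolding avoiding_2K2_coloring_def
proof (intro conjI allI ballI impI)
  show "h v < card V" if "v \<in> V" for v using h that by (auto simp: bij_betw_def)
  show "h x \<noteq> h y" if "x \<in> V" "y \<in> V" "E x y" for x y
    using h that assms(2) by (auto simp: bij_betw_def inj_on_def)
  show "\<not> has_induced_2K2 E {v \<in> V. h v = i \<or> h v = j}" for i j
  proof
    assume "has_induced_2K2 E {v \<in> V. h v = i \<or> h v = j}"
    then obtain x y z where "x \<in> V" "y \<in> V" "z \<in> V" "distinct [x, y, z]"
        "h x \<in> {i, j}" "h y \<in> {i, j}" "h z \<in> {i, j}"
      unfolding has_induced_2K2_def by auto
    with h show False by (auto simp: bij_betw_def dest: inj_onD)
  qed
qed

lemma chi_2K2_attained:
  assumes "finite V" and "\<And>x. \<not> E x x"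
  shows "\<exists>f. avoiding_2K2_coloring V E (chi_2K2 V E) f"
proof -
  obtain h where "bij_betw h V {0..<card V}" using ex_bij_betw_finite_nat[OF \<open>finite V\<close>] by blast
  then have "avoiding_2K2_coloring V E (card V) h" using assms by (intro injective_coloring_avoids_2K2)
  then have "\<exists>k f. avoiding_2K2_coloring V E k f" by blast
  then show ?thesis unfolding chi_2K2_def by (rule LeastI_ex)
qed

lemma incidence_edge_simps [simp]:
  "incidence_edge P L inc (Inl a) (Inr l) \<longleftrightarrow> a \<in> P \<and> l \<in> L \<and> inc a l"
  "incidence_edge P L inc (Inr l) (Inl a) \<longleftrightarrow> a \<in> P \<and> l \<in> L \<and> inc a l"
  "\<not> incidence_edge P L inc (Inl a) (Inl b)"
  "\<not> incidence_edge P L inc (Inr l) (Inr m)"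
  by (auto simp: incidence_edge_def)

lemma has_induced_2K2_incidenceI:
  assumes "Inl a \<in> S" "Inr l \<in> S" "Inl b \<in> S" "Inr m \<in> S" "a \<noteq> b" "l \<noteq> m"
    and "a \<in> P" "b \<in> P" "l \<in> L" "m \<in> L" "inc a l" "inc b m" "\<not> inc a m" "\<not> inc b l"
  shows "has_induced_2K2 (incidence_edge P L inc) S"
  unfolding has_induced_2K2_def
  by (rule bexI[OF _ assms(1)] bexI[OF _ assms(2)] bexI[OF _ assms(3)] bexI[OF _ assms(4)])+
    (use assms(5-) in simp)

locale bounded_partial_linear_space =
  fixes P :: "'p set" and L :: "'l set" and inc :: "'p \<Rightarrow> 'l \<Rightarrow> bool" and D :: nat
  assumes finite_points: "finite P" and finite_lines: "finite L"
    and lines_through: "a \<in> P \<Longrightarrow> card {l \<in> L. inc a l} \<le> D"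
    and points_on: "l \<in> L \<Longrightarrow> card {a \<in> P. inc a l} \<le> D"
    and line_through_unique:
      "\<lbrakk>a \<in> P; b \<in> P; a \<noteq> b; l \<in> L; m \<in> L; inc a l; inc b l; inc a m; inc b m\<rbrakk> \<Longrightarrow> l = m"
begin

lemma card_bicoloured_incidences_le:
  assumes no_2K2: "\<not> has_induced_2K2 (incidence_edge P L inc) {v \<in> incidence_vertices P L. f v = i \<or> f v = j}"
  shows "card {(a, l). a \<in> P \<and> l \<in> L \<and> inc a l \<and> f (Inl a) \<in> {i, j} \<and> f (Inr l) \<in> {i, j}} \<le> 2 * D - 1"
    (is "card ?H \<le> _")
proof (rule C4_free_2K2_free_card_le)
  show "finite ?H" using finite_points finite_lines by (auto intro: finite_subset[of _ "P \<times> L"])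
  show "card {l. (a, l) \<in> ?H} \<le> D" for a
  proof (cases "a \<in> P")
    case True
    then have "card {l. (a, l) \<in> ?H} \<le> card {l \<in> L. inc a l}" using finite_lines by (intro card_mono) auto
    with lines_through[OF True] show ?thesis by linarith
  qed simp
  show "card {a. (a, l) \<in> ?H} \<le> D" for l
  proof (cases "l \<in> L")
    case True
    then have "card {a. (a, l) \<in> ?H} \<le> card {a \<in> P. inc a l}" using finite_points by (intro card_mono) auto
    with points_on[OF True] show ?thesis by linarith
  qed simp
  show "a1 = a2 \<or> l1 = l2" if "(a1, l1) \<in> ?H" "(a1, l2) \<in> ?H" "(a2, l1) \<in> ?H" "(a2, l2) \<in> ?H" for a1 a2 l1 l2
    using that line_through_unique[of a1 a2 l1 l2] by auto
  show "(a1, l2) \<in> ?H \<or> (a2, l1) \<in> ?H" if "(a1, l1) \<in> ?H" "(a2, l2) \<in> ?H" "a1 \<noteq> a2" "l1 \<noteq> l2" for a1 a2 l1 l2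
  proof (rule ccontr)
    assume "\<not> ?thesis"
    with that have "\<not> inc a1 l2" "\<not> inc a2 l1" by auto
    with that have "has_induced_2K2 (incidence_edge P L inc) {v \<in> incidence_vertices P L. f v = i \<or> f v = j}"
      by (intro has_induced_2K2_incidenceI[where a = a1 and l = l1 and b = a2 and m = l2])
        (auto simp: incidence_vertices_def)
    with no_2K2 show False by contradiction
  qed
qed

lemma card_incidences_le_choose:
  assumes "avoiding_2K2_coloring (incidence_vertices P L) (incidence_edge P L inc) k f"
  shows "card (SIGMA a:P. {l \<in> L. inc a l}) \<le> (k choose 2) * (2 * D - 1)"
proof -
  define pairs where "pairs = {S. S \<subseteq> {0..<k} \<and> card S = 2}"
  define H where "H S = {(a, l). a \<in> P \<and> l \<in> L \<and> inc a l \<and> f (Inl a) \<in> S \<and> f (Inr l) \<in> S}" for S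
  have "(SIGMA a:P. {l \<in> L. inc a l}) \<subseteq> (\<Union>S\<in>pairs. H S)"
  proof clarify
    fix a l assume "a \<in> P" "l \<in> L" "inc a l"
    with assms have "{f (Inl a), f (Inr l)} \<in> pairs"
      by (auto simp: avoiding_2K2_coloring_def pairs_def incidence_vertices_def)
    with \<open>a \<in> P\<close> \<open>l \<in> L\<close> \<open>inc a l\<close> show "(a, l) \<in> (\<Union>S\<in>pairs. H S)" by (auto simp: H_def)
  qed
  then have "card (SIGMA a:P. {l \<in> L. inc a l}) \<le> card (\<Union>S\<in>pairs. H S)"
    by (intro card_mono) (auto simp: H_def intro: finite_subset[of _ "P \<times> L"] finite_points finite_lines)
  also have "\<dots> \<le> (\<Sum>S\<in>pairs. card (H S))"
    by (rule card_UN_le) (auto simp: pairs_def intro: finite_subset[of _ "Pow {0..<k}"])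
  also have "\<dots> \<le> (\<Sum>S\<in>pairs. 2 * D - 1)"
  proof (rule sum_mono)
    fix S assume "S \<in> pairs"
    then obtain i j where "S = {i, j}" by (auto simp: pairs_def card_2_iff)
    with assms card_bicoloured_incidences_le[of f i j] show "card (H S) \<le> 2 * D - 1"
      by (simp add: avoiding_2K2_coloring_def H_def)
  qed
  also have "\<dots> = (k choose 2) * (2 * D - 1)" by (simp add: pairs_def n_subsets)
  finally show ?thesis .
qed

end

locale projective_plane =
  fixes P :: "'p set" and L :: "'l set" and inc :: "'p \<Rightarrow> 'l \<Rightarrow> bool" and p :: nat
  assumes plane: "projective_plane_of_order P L inc p"
begin

lemma finite_points: "finite P" and finite_lines: "finite L"
  using plane by (auto simp: projective_plane_of_order_def)

lemma ex1_line_through: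
  "a \<in> P \<Longrightarrow> b \<in> P \<Longrightarrow> a \<noteq> b \<Longrightarrow> \<exists>!l. l \<in> L \<and> inc a l \<and> inc b l"
  using plane by (auto simp: projective_plane_of_order_def)

lemma ex1_point_on:
  "l \<in> L \<Longrightarrow> m \<in> L \<Longrightarrow> l \<noteq> m \<Longrightarrow> \<exists>!a. a \<in> P \<and> inc a l \<and> inc a m"
  using plane by (auto simp: projective_plane_of_order_def)

lemma card_points_on: "l \<in> L \<Longrightarrow> card {a \<in> P. inc a l} = p + 1"
  using plane by (auto simp: projective_plane_of_order_def)

lemma line_through_unique:
  "\<lbrakk>a \<in> P; b \<in> P; a \<noteq> b; l \<in> L; m \<in> L; inc a l; inc b l; inc a m; inc b m\<rbrakk> \<Longrightarrow> l = m"
  using ex1_line_through[of a b] by auto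

lemma ex_quadrangle:
  "\<exists>a\<in>P. \<exists>b\<in>P. \<exists>c\<in>P. \<exists>d\<in>P. distinct [a, b, c, d] \<and>
     (\<forall>l\<in>L. card ({a, b, c, d} \<inter> {x. inc x l}) \<le> 2)"
  using plane by (simp only: projective_plane_of_order_def)

lemma ex_line_avoiding:
  assumes "a \<in> P" shows "\<exists>l\<in>L. \<not> inc a l"
proof -
  obtain q1 q2 q3 q4 where q: "q1 \<in> P" "q2 \<in> P" "q3 \<in> P" "q4 \<in> P" "distinct [q1, q2, q3, q4]"
    and at_most_two: "\<forall>l\<in>L. card ({q1, q2, q3, q4} \<inter> {x. inc x l}) \<le> 2"
    using ex_quadrangle by blast
  have not_collinear: "\<not> (inc x l \<and> inc y l \<and> inc z l)"
    if "l \<in> L" "x \<in> {q1, q2, q3, q4}" "y \<in> {q1, q2, q3, q4}" "z \<in> {q1, q2, q3, q4}"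
       "distinct [x, y, z]" for l x y z
  proof
    assume "inc x l \<and> inc y l \<and> inc z l"
    then have "card {x, y, z} \<le> card ({q1, q2, q3, q4} \<inter> {x. inc x l})"
      using that by (intro card_mono) auto
    with at_most_two that show False by auto
  qed
  txt \<open>A point on every line would be both \<open>q1\<close> (the meet of \<open>q1q2\<close> and \<open>q1q3\<close>) and on \<open>q3q4\<close>.\<close>
  show ?thesis
  proof (rule ccontr)
    assume "\<not> ?thesis"
    then have on_all: "\<And>l. l \<in> L \<Longrightarrow> inc a l" by blast
    obtain l12 where l12: "l12 \<in> L" "inc q1 l12" "inc q2 l12" using ex1_line_through[of q1 q2] q by auto
    obtain l13 where l13: "l13 \<in> L" "inc q1 l13" "inc q3 l13" using ex1_line_through[of q1 q3] q by auto
    obtain l34 where l34: "l34 \<in> L" "inc q3 l34" "inc q4 l34" using ex1_line_through[of q3 q4] q by auto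
    have "l12 \<noteq> l13" using not_collinear[of l12 q1 q2 q3] l12 l13 q by auto
    then have "a = q1"
      using ex1_point_on[of l12 l13] on_all l12 l13 q \<open>a \<in> P\<close> by auto
    then show False using not_collinear[of l34 q1 q3 q4] on_all l34 q by auto
  qed
qed

lemma card_lines_through:
  assumes a: "a \<in> P" shows "card {l \<in> L. inc a l} = p + 1"
proof -
  obtain l0 where l0: "l0 \<in> L" "\<not> inc a l0" using ex_line_avoiding[OF a] by blast
  define meet where "meet l = (THE x. x \<in> P \<and> inc x l \<and> inc x l0)" for l
  have meet_eq: "meet l = x" if "l \<in> L" "inc a l" "x \<in> P" "inc x l" "inc x l0" for l x
  proof -
    have "l \<noteq> l0" using that l0 by auto
    with ex1_point_on[OF \<open>l \<in> L\<close> l0(1)] that show ?thesis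
      unfolding meet_def by (intro the1_equality) auto
  qed
  have meet: "meet l \<in> P \<and> inc (meet l) l \<and> inc (meet l) l0" if "l \<in> L" "inc a l" for l
  proof -
    have "l \<noteq> l0" using that l0 by auto
    then obtain x where "x \<in> P" "inc x l" "inc x l0" using ex1_point_on[OF \<open>l \<in> L\<close> l0(1)] by blast
    with meet_eq[OF that this] show ?thesis by simp
  qed
  have "bij_betw meet {l \<in> L. inc a l} {x \<in> P. inc x l0}"
  proof (rule bij_betw_imageI)
    show "inj_on meet {l \<in> L. inc a l}"
    proof (rule inj_onI)
      fix l m assume "l \<in> {l \<in> L. inc a l}" "m \<in> {l \<in> L. inc a l}" "meet l = meet m"
      moreover have "meet l \<noteq> a" using meet[of l] l0 \<open>l \<in> _\<close> by auto
      ultimately show "l = m" using meet[of l] meet[of m] line_through_unique[of a "meet l" l m] a by auto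
    qed
    show "meet ` {l \<in> L. inc a l} = {x \<in> P. inc x l0}"
    proof
      show "meet ` {l \<in> L. inc a l} \<subseteq> {x \<in> P. inc x l0}" using meet by auto
      show "{x \<in> P. inc x l0} \<subseteq> meet ` {l \<in> L. inc a l}"
      proof
        fix x assume x: "x \<in> {x \<in> P. inc x l0}"
        then have "x \<noteq> a" using l0 by auto
        then obtain m where "m \<in> L" "inc a m" "inc x m" using ex1_line_through[OF a] x by blast
        with meet_eq[of m x] x show "x \<in> meet ` {l \<in> L. inc a l}" by force
      qed
    qed
  qed
  then show ?thesis using card_points_on[OF l0(1)] by (simp add: bij_betw_same_card)
qed

lemma card_points_ge: "p\<^sup>2 + p + 1 \<le> card P"
proof -
  obtain a where a: "a \<in> P" using plane by (auto simp: projective_plane_of_order_def)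
  define pencil where "pencil = {l \<in> L. inc a l}"
  define rest where "rest l = {x \<in> P. inc x l} - {a}" for l
  have "(\<Sum>l\<in>pencil. card (rest l)) = card (\<Union>l\<in>pencil. rest l)"
  proof (rule card_UN_disjoint[symmetric])
    show "\<forall>l\<in>pencil. \<forall>m\<in>pencil. l \<noteq> m \<longrightarrow> rest l \<inter> rest m = {}"
      using line_through_unique[of a _ _ _] a by (fastforce simp: pencil_def rest_def)
  qed (auto simp: pencil_def rest_def finite_points finite_lines)
  also have "\<dots> \<le> card (P - {a})"
    by (intro card_mono) (auto simp: rest_def finite_points)
  also have "\<dots> = card P - 1" using a by simp
  finally have "(\<Sum>l\<in>pencil. card (rest l)) \<le> card P - 1" .
  moreover have "card (rest l) = p" if "l \<in> pencil" for l
    using that a card_points_on by (auto simp: pencil_def rest_def card_Diff_singleton)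
  ultimately have "(p + 1) * p \<le> card P - 1"
    using card_lines_through[OF a] by (simp add: pencil_def)
  moreover have "card P \<ge> 1" using a finite_points by (auto simp: Suc_le_eq card_gt_0_iff)
  ultimately show ?thesis by (simp add: power2_eq_square algebra_simps)
qed

lemma card_incidences: "card (SIGMA a:P. {l \<in> L. inc a l}) = card P * (p + 1)"
  using finite_points finite_lines by (simp add: card_SigmaI card_lines_through)

end

sublocale projective_plane \<subseteq> bounded_partial_linear_space P L inc "p + 1"
  by unfold_locales (auto simp: finite_points finite_lines card_lines_through card_points_on
      intro: line_through_unique)

context projective_plane
begin

lemma avoiding_2K2_coloring_num_colours_bound:
  assumes "avoiding_2K2_coloring (incidence_vertices P L) (incidence_edge P L inc) k f"
  shows "2 * (p\<^sup>2 + p + 1) * (p + 1) \<le> k * (k - 1) * (2 * p + 1)"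
proof -
  have "card P * (p + 1) \<le> (k choose 2) * (2 * p + 1)"
    using card_incidences_le_choose[OF assms] card_incidences by simp
  moreover have "(p\<^sup>2 + p + 1) * (p + 1) \<le> card P * (p + 1)"
    using card_points_ge by (rule mult_le_mono1)
  moreover have "2 * (k choose 2) * (2 * p + 1) \<le> k * (k - 1) * (2 * p + 1)"
    by (intro mult_le_mono1) (simp add: choose_two)
  ultimately show ?thesis by (simp add: algebra_simps)
qed

end

lemma sqrt_plus_half_le:
  fixes x k :: real
  assumes "x \<le> k * (k - 1)" "0 \<le> k" "0 < x"
  shows "sqrt x + 1/2 \<le> k"
proof -
  have "1 \<le> k"
  proof (rule ccontr)
    assume "\<not> 1 \<le> k"
    with assms(2) have "k * (k - 1) \<le> 0" by (simp add: mult_nonneg_nonpos)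
    with assms(1,3) show False by linarith
  qed
  have "sqrt x \<le> k - 1/2"
    using \<open>1 \<le> k\<close> assms(1) by (intro real_le_lsqrt) (auto simp: power2_eq_square algebra_simps)
  then show ?thesis by simp
qed

lemma sqrt_half_plus_quarter_sqrt_le:
  fixes p :: nat
  defines "N \<equiv> real (p\<^sup>2 + p + 1)"
  shows "sqrt (2 * N / 2 + sqrt (2 * N) / 4) \<le> sqrt (2 * N * real (p + 1) / real (2 * p + 1))"
proof (rule real_sqrt_le_mono)
  have N: "N \<ge> 1" by (simp add: N_def)
  have d: "0 < real (2 * p + 1)" by simp
  have "(real (2 * p + 1))\<^sup>2 \<le> 8 * N"
  proof -
    have "(2 * p + 1)\<^sup>2 \<le> 8 * (p\<^sup>2 + p + 1)" by (simp add: power2_eq_square algebra_simps)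
    then show ?thesis unfolding N_def by (metis of_nat_le_iff of_nat_mult of_nat_numeral of_nat_power)
  qed
  then have "2 * N * (real (2 * p + 1))\<^sup>2 \<le> (4 * N)\<^sup>2"
    using N by (simp add: power2_eq_square mult_left_mono)
  then have "sqrt (2 * N) \<le> 4 * N / real (2 * p + 1)"
    using N d by (intro real_le_lsqrt) (auto simp: power_divide pos_le_divide_eq)
  moreover have "2 * N * real (p + 1) / real (2 * p + 1) = N + N / real (2 * p + 1)"
    using d by (simp add: field_simps)
  ultimately show "2 * N / 2 + sqrt (2 * N) / 4 \<le> 2 * N * real (p + 1) / real (2 * p + 1)"
    by (simp add: field_simps)
qed

theorem corollary6:
  fixes P :: "'p set" and L :: "'l set" and inc :: "'p \<Rightarrow> 'l \<Rightarrow> bool" and p :: nat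
  assumes "prime_power p"
    and "projective_plane_of_order P L inc p"
  defines "n \<equiv> 2 * (p^2 + p + 1)"
  shows "real (chi_2K2 (incidence_vertices P L) (incidence_edge P L inc))
           \<ge> sqrt (2 * real (p^2 + p + 1) * real (p + 1) / real (2 * p + 1)) + 1/2
       \<and> sqrt (2 * real (p^2 + p + 1) * real (p + 1) / real (2 * p + 1)) + 1/2
           \<ge> sqrt (real n / 2 + sqrt (real n) / 4) + 1/2"
proof
  txt \<open>The bound holds for every projective plane.\<close>
  interpret projective_plane P L inc p by unfold_locales (rule assms(2))
  define k where "k = chi_2K2 (incidence_vertices P L) (incidence_edge P L inc)"
  obtain f where "avoiding_2K2_coloring (incidence_vertices P L) (incidence_edge P L inc) k f"
    using chi_2K2_attained[of "incidence_vertices P L" "incidence_edge P L inc"] finite_points finite_lines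
    unfolding k_def by (auto simp: incidence_vertices_def incidence_edge_def)
  then have count: "2 * (p\<^sup>2 + p + 1) * (p + 1) \<le> k * (k - 1) * (2 * p + 1)"
    by (rule avoiding_2K2_coloring_num_colours_bound)
  then have "1 \<le> k" by (cases k) auto
  with count have "2 * real (p\<^sup>2 + p + 1) * real (p + 1) \<le> real k * (real k - 1) * real (2 * p + 1)"
    by (metis (mono_tags, lifting) of_nat_1 of_nat_diff of_nat_le_iff of_nat_mult of_nat_numeral)
  then have "2 * real (p\<^sup>2 + p + 1) * real (p + 1) / real (2 * p + 1) \<le> real k * (real k - 1)"
    by (simp add: pos_divide_le_eq)
  then show "sqrt (2 * real (p^2 + p + 1) * real (p + 1) / real (2 * p + 1)) + 1/2 \<le> real k"
    by (rule sqrt_plus_half_le) (auto intro!: divide_pos_pos mult_pos_pos add_pos_nonneg)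
next
  show "sqrt (real n / 2 + sqrt (real n) / 4) + 1/2
          \<le> sqrt (2 * real (p^2 + p + 1) * real (p + 1) / real (2 * p + 1)) + 1/2"
    using sqrt_half_plus_quarter_sqrt_le[of p] by (simp add: n_def)
qed

end
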